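(* Let $(V,\mathcal H,\iota,W)$ be a generalized functional theory. Then $\overrightarrow{\mathrm{aff}(\iota^*(\mathcal P))}=\overrightarrow{\mathrm{aff}(\iota^*(\mathcal E))}$, and this space is canonically isomorphic to $\big(V/\iota^{-1}(\mathrm{span}\{\mathbb 1\})\big)^*$.
   Context: A generalized functional theory is a tuple $(V,\mathcal H,\iota,W)$ with $V$ a finite-dimensional real vector space, $\mathcal H$ a finite-dimensional complex Hilbert space, $\iota:V\to i\mathfrak u(\mathcal H)$ a linear map into the real vector space of Hermitian operators, and $W$ Hermitian. Density operators are regarded as elements of $(i\mathfrak u(\mathcal H))^*$ via $\Gamma\mapsto\mathrm{Tr}(\Gamma\,\cdot)$, and $\iota^*$ denotes the dual map. $\mathcal P$ is the set of pure states (rank-one projectors) and $\mathcal E$ the set of density operators. $\mathrm{aff}(X)$ is the affine hull and $\overrightarrow A=\{a-b:a,b\in A\}$ the translation space of an affine set $A$. $\mathbb 1$ is the identity operator on $\mathcal H$. *)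

theory Defs
  imports "HOL-Analysis.Analysis"
begin

text \<open>Finite-dimensional complex Hilbert space H = complex^'n; operators on H are
  matrices complex^'n^'n.\<close>

definition mtrace :: "complex^'n^'n \<Rightarrow> complex" where
  "mtrace A = (\<Sum>i\<in>UNIV. A $ i $ i)"

definition adjoint_mat :: "complex^'n^'n \<Rightarrow> complex^'n^'n" where
  "adjoint_mat A = (\<chi> i j. cnj (A $ j $ i))"

definition hermitian :: "complex^'n^'n \<Rightarrow> bool" where
  "hermitian A \<longleftrightarrow> adjoint_mat A = A"

definition pure_states :: "(complex^'n^'n) set" where
  "pure_states = {(\<chi> i j. \<psi> $ i * cnj (\<psi> $ j)) | \<psi> :: complex^'n. norm \<psi> = 1}"

definition density_ops :: "(complex^'n^'n) set" where
  "density_ops = {\<Gamma>. hermitian \<Gamma> \<and> mtrace \<Gamma> = 1 \<and>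
      (\<forall>x :: complex^'n. 0 \<le> Re (\<Sum>i\<in>UNIV. cnj (x $ i) * (\<Gamma> *v x) $ i))}"

text \<open>The dual map iota^*: a density operator Gamma (viewed as the functional Tr(Gamma .))
  is sent to the linear functional v \<mapsto> Tr(Gamma iota(v)) on V.\<close>
definition iota_star :: "('v \<Rightarrow> complex^'n^'n) \<Rightarrow> complex^'n^'n \<Rightarrow> ('v \<Rightarrow> real)" where
  "iota_star \<iota> \<Gamma> = (\<lambda>v. Re (mtrace (\<Gamma> ** \<iota> v)))"

definition fun_aff :: "('v \<Rightarrow> real) set \<Rightarrow> ('v \<Rightarrow> real) set" where
  "fun_aff S = {(\<lambda>v. \<Sum>x\<in>T. c x * x v) | T c. finite T \<and> T \<noteq> {} \<and> T \<subseteq> S \<and> sum c T = 1}"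

definition translation_space :: "('v \<Rightarrow> real) set \<Rightarrow> ('v \<Rightarrow> real) set" where
  "translation_space A = {(\<lambda>v. a v - b v) | a b. a \<in> A \<and> b \<in> A}"

end

theory Submission
  imports Defs
begin

text \<open>
  A linear functional f on V lies in the translation space of the affine hull of a set S of
  linear functionals as soon as it vanishes at every v where all elements of S agree: writing
  functionals as inner products with Riesz representatives, the component of the representative
  of f orthogonal to the differences of representatives of S must be such a v, hence zero.
  For S = iota^*(pure states), all elements agree at v iff the Hermitian operator iota(v) has
  the same expectation in every pure state; testing with e_i, e_i + e_j and e_i + i e_j shows
  that iota(v) is then a real multiple of the identity.  Conversely, every density operator has
  trace one, so every element of the affine hull of iota^*(density operators) takes the value r
  wherever iota(v) = r 1, and differences of such elements vanish there.  As pure states are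
  density operators, the three spaces coincide.
\<close>

definition projector :: "complex^'n \<Rightarrow> complex^'n^'n" where
  "projector \<psi> = (\<chi> i j. \<psi> $ i * cnj (\<psi> $ j))"

definition quad_form :: "complex^'n^'n \<Rightarrow> complex^'n \<Rightarrow> complex" where
  "quad_form A x = (\<Sum>i\<in>UNIV. cnj (x $ i) * (A *v x) $ i)"

lemma mtrace_eq_trace: "mtrace = trace"
  by (simp add: fun_eq_iff mtrace_def trace_def)

lemma pure_states_eq: "pure_states = projector ` {\<psi>. norm \<psi> = 1}"
  unfolding pure_states_def projector_def by blast

lemma hermitian_iff: "hermitian A \<longleftrightarrow> (\<forall>i j. A $ j $ i = cnj (A $ i $ j))"
proof -
  have "hermitian A \<longleftrightarrow> (\<forall>i j. cnj (A $ j $ i) = A $ i $ j)"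
    unfolding hermitian_def adjoint_mat_def vec_eq_iff by simp
  also have "\<dots> \<longleftrightarrow> (\<forall>i j. A $ j $ i = cnj (A $ i $ j))"
    by (metis complex_cnj_cnj)
  finally show ?thesis .
qed

lemma density_ops_iff:
  "\<Gamma> \<in> density_ops \<longleftrightarrow> hermitian \<Gamma> \<and> trace \<Gamma> = 1 \<and> (\<forall>x. 0 \<le> Re (quad_form \<Gamma> x))"
  unfolding density_ops_def mtrace_eq_trace quad_form_def by simp

lemma trace_projector_mult: "trace (projector \<psi> ** B) = quad_form B \<psi>"
proof -
  have "trace (projector \<psi> ** B) = (\<Sum>i\<in>UNIV. \<Sum>k\<in>UNIV. \<psi> $ i * cnj (\<psi> $ k) * B $ k $ i)"
    by (simp add: trace_def projector_def matrix_matrix_mult_def)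
  also have "\<dots> = (\<Sum>k\<in>UNIV. \<Sum>i\<in>UNIV. cnj (\<psi> $ k) * (B $ k $ i * \<psi> $ i))"
    by (subst sum.swap) (simp add: mult_ac)
  also have "\<dots> = quad_form B \<psi>"
    by (simp add: quad_form_def matrix_vector_mult_def sum_distrib_left)
  finally show ?thesis .
qed

lemma quad_form_projector:
  "quad_form (projector \<psi>) x = of_real ((norm (\<Sum>j\<in>UNIV. cnj (\<psi> $ j) * x $ j))\<^sup>2)"
proof -
  define s where "s = (\<Sum>j\<in>UNIV. cnj (\<psi> $ j) * x $ j)"
  have "(projector \<psi> *v x) $ i = \<psi> $ i * s" for i
    unfolding s_def projector_def matrix_vector_mult_def by (simp add: sum_distrib_left mult.assoc)
  then have "quad_form (projector \<psi>) x = (\<Sum>i\<in>UNIV. cnj (x $ i) * \<psi> $ i) * s"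
    by (simp add: quad_form_def sum_distrib_right mult.assoc)
  also have "(\<Sum>i\<in>UNIV. cnj (x $ i) * \<psi> $ i) = cnj s"
    unfolding s_def by (simp add: mult.commute)
  also have "cnj s * s = of_real ((norm s)\<^sup>2)"
    by (metis complex_norm_square mult.commute)
  finally show ?thesis
    unfolding s_def .
qed

lemma trace_projector: "trace (projector \<psi>) = of_real ((norm \<psi>)\<^sup>2)"
proof -
  have "trace (projector \<psi>) = (\<Sum>i\<in>UNIV. of_real ((norm (\<psi> $ i))\<^sup>2))"
    unfolding trace_def projector_def by (simp only: vec_lambda_beta complex_norm_square)
  also have "\<dots> = of_real ((norm \<psi>)\<^sup>2)"
    by (simp add: inner_vec_def power2_norm_eq_inner)
  finally show ?thesis .
qed

lemma projector_in_density_ops: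
  assumes "norm \<psi> = 1"
  shows "projector \<psi> \<in> density_ops"
proof -
  have "hermitian (projector \<psi>)"
    by (simp add: hermitian_iff projector_def mult.commute)
  moreover have "0 \<le> Re (quad_form (projector \<psi>) x)" for x
    by (simp add: quad_form_projector)
  ultimately show ?thesis
    by (simp add: density_ops_iff trace_projector assms)
qed

lemma pure_states_subset_density_ops: "pure_states \<subseteq> density_ops"
  by (auto simp: pure_states_eq projector_in_density_ops)

lemma quad_form_scaleR: "quad_form B (r *\<^sub>R x) = of_real (r\<^sup>2) * quad_form B x"
proof -
  have "(r *\<^sub>R x) $ i = of_real r * x $ i" for i
    by (simp only: vector_scaleR_component) (simp only: scaleR_conv_of_real)
  then show ?thesis
    by (simp add: quad_form_def matrix_vector_mult_def sum_distrib_left power2_eq_square mult_ac)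
qed

lemma matrix_vector_mult_axis: "(B *v axis i c) $ k = B $ k $ i * c"
  by (simp add: matrix_vector_mult_def axis_def if_distrib[of "(*) _"] cong: if_cong)

lemma sum_cnj_axis_mult: "(\<Sum>k\<in>UNIV. cnj (axis i c $ k) * f k) = cnj c * f i"
proof -
  have "cnj (axis i c $ k) * f k = (if k = i then cnj c * f i else 0)" for k
    by (simp add: axis_def)
  then show ?thesis by simp
qed

lemma quad_form_axis: "quad_form B (axis i 1) = B $ i $ i"
  by (simp add: quad_form_def sum_cnj_axis_mult matrix_vector_mult_axis)

lemma quad_form_axis_add:
  "quad_form B (axis i 1 + axis j \<beta>)
     = B $ i $ i + \<beta> * B $ i $ j + cnj \<beta> * B $ j $ i + cnj \<beta> * \<beta> * B $ j $ j"
  by (simp add: quad_form_def matrix_vector_right_distrib distrib_left distrib_right sum.distrib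
      sum_cnj_axis_mult) (simp add: matrix_vector_mult_axis mult_ac)

lemma norm_axis_add:
  assumes "i \<noteq> j"
  shows "(norm (axis i 1 + axis j (\<beta>::complex)))\<^sup>2 = 1 + (norm \<beta>)\<^sup>2"
  using assms by (simp add: power2_norm_eq_inner inner_add_left inner_add_right inner_axis_axis)

lemma norm_axis_complex_1 [simp]: "norm (axis i (1::complex)) = 1"
  by (simp add: norm_eq_1 inner_axis_axis)

lemma hermitian_eq_scalar_if_quad_form_const:
  fixes B :: "complex^'n^'n"
  assumes herm: "hermitian B" and const: "\<And>x. norm x = 1 \<Longrightarrow> Re (quad_form B x) = c"
  shows "B = c *\<^sub>R mat 1"
proof -
  have hom: "Re (quad_form B x) = c * (norm x)\<^sup>2" for x
  proof (cases "x = 0")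
    case True
    then show ?thesis by (simp add: quad_form_def)
  next
    case False
    define u where "u = (1 / norm x) *\<^sub>R x"
    have "x = norm x *\<^sub>R u" using False by (simp add: u_def)
    then have "quad_form B x = of_real ((norm x)\<^sup>2) * quad_form B u" by (metis quad_form_scaleR)
    moreover have "norm u = 1" using False by (simp add: u_def)
    ultimately show ?thesis using const by simp
  qed
  have conj: "B $ j $ i = cnj (B $ i $ j)" for i j
    using herm unfolding hermitian_iff by blast
  have diag: "B $ i $ i = of_real c" for i
  proof (rule complex_eqI)
    show "Re (B $ i $ i) = Re (of_real c)"
      using hom[of "axis i 1"] by (simp add: quad_form_axis)
    have "Im (B $ i $ i) = - Im (B $ i $ i)"
      using arg_cong[OF conj[of i i], of Im] by simp
    then show "Im (B $ i $ i) = Im (of_real c)" by simp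
  qed
  have off: "B $ i $ j = 0" if "i \<noteq> j" for i j
  proof -
    have "Re (\<beta> * B $ i $ j) = 0" for \<beta>
    proof -
      have norm_sq: "cnj \<beta> * \<beta> = of_real ((norm \<beta>)\<^sup>2)"
        by (metis complex_norm_square mult.commute)
      have "Re (quad_form B (axis i 1 + axis j \<beta>)) = c + 2 * Re (\<beta> * B $ i $ j) + (norm \<beta>)\<^sup>2 * c"
        unfolding quad_form_axis_add diag conj[of i j] norm_sq by simp
      moreover have "Re (quad_form B (axis i 1 + axis j \<beta>)) = c * (1 + (norm \<beta>)\<^sup>2)"
        using hom norm_axis_add[OF that] by simp
      ultimately show ?thesis by (simp add: algebra_simps)
    qed
    from this[of 1] this[of \<i>] show ?thesis by (simp add: complex_eq_iff)
  qed
  show ?thesis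
    unfolding vec_eq_iff mat_def by (simp add: diag off of_real_def)
qed

lemma trace_scaleR: "trace (r *\<^sub>R A) = r *\<^sub>R trace (A :: 'a::real_algebra_1^'n^'n)"
  by (simp add: trace_def scaleR_sum_right)

lemma linear_Re_trace_mult: "linear (\<lambda>A. Re (trace (\<Gamma> ** A)))"
  for \<Gamma> :: "complex^'n^'n"
  by (rule linearI)
     (simp_all add: matrix_add_ldistrib trace_add matrix_scalar_ac scalar_matrix_assoc[symmetric] trace_scaleR)

lemma linear_iota_star:
  assumes "linear \<iota>"
  shows "linear (iota_star \<iota> \<Gamma>)"
proof -
  have "iota_star \<iota> \<Gamma> = (\<lambda>A. Re (trace (\<Gamma> ** A))) \<circ> \<iota>"
    by (simp add: fun_eq_iff iota_star_def mtrace_eq_trace)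
  then show ?thesis
    using linear_compose[OF assms linear_Re_trace_mult] by simp
qed

lemma iota_star_scalar:
  assumes "trace \<Gamma> = 1" and "\<iota> v = r *\<^sub>R mat 1"
  shows "iota_star \<iota> \<Gamma> v = r"
  using assms by (simp add: iota_star_def mtrace_eq_trace matrix_scalar_ac trace_scaleR)

lemma iota_star_projector: "iota_star \<iota> (projector \<psi>) v = Re (quad_form (\<iota> v) \<psi>)"
  by (simp add: iota_star_def mtrace_eq_trace trace_projector_mult)

lemma fun_aff_mono: "S \<subseteq> S' \<Longrightarrow> fun_aff S \<subseteq> fun_aff S'"
  unfolding fun_aff_def by blast

lemma translation_space_mono: "A \<subseteq> A' \<Longrightarrow> translation_space A \<subseteq> translation_space A'"
  unfolding translation_space_def by blast

lemma fun_aff_linear: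
  assumes "\<forall>x\<in>S. linear x" and "y \<in> fun_aff S"
  shows "linear y"
proof -
  obtain T c where y: "y = (\<lambda>v. \<Sum>x\<in>T. c x * x v)" and "T \<subseteq> S"
    using assms(2) unfolding fun_aff_def by blast
  have "linear (\<lambda>v. c x * x v)" if "x \<in> T" for x
  proof -
    have "linear ((*) (c x) \<circ> x)"
      using assms(1) \<open>T \<subseteq> S\<close> that
      by (intro linear_compose bounded_linear.linear[OF bounded_linear_mult_right]) auto
    then show ?thesis by (simp add: o_def)
  qed
  then show ?thesis
    unfolding y by (rule linear_compose_sum[rule_format])
qed

lemma fun_aff_eval:
  assumes "\<forall>x\<in>S. x v = r" and "y \<in> fun_aff S"
  shows "y v = r"
proof -
  obtain T c where y: "y = (\<lambda>v. \<Sum>x\<in>T. c x * x v)" and "T \<subseteq> S" "sum c T = 1"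
    using assms(2) unfolding fun_aff_def by blast
  have "y v = (\<Sum>x\<in>T. c x * r)"
    unfolding y by (rule sum.cong) (use assms(1) \<open>T \<subseteq> S\<close> in auto)
  also have "\<dots> = r"
    using \<open>sum c T = 1\<close> by (simp add: sum_distrib_right[symmetric])
  finally show ?thesis .
qed

lemma translation_space_fun_aff_linear:
  assumes "\<forall>x\<in>S. linear x" and "h \<in> translation_space (fun_aff S)"
  shows "linear h"
  using assms unfolding translation_space_def by (auto intro: linear_compose_sub fun_aff_linear)

lemma translation_space_fun_aff_eval:
  assumes "\<forall>x\<in>S. x v = r" and "h \<in> translation_space (fun_aff S)"
  shows "h v = 0"
proof -
  obtain a b where h: "h = (\<lambda>v. a v - b v)" and "a \<in> fun_aff S" "b \<in> fun_aff S"
    using assms(2) unfolding translation_space_def by blast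
  then have "a v = r" "b v = r"
    by (simp_all add: fun_aff_eval[OF assms(1)])
  then show ?thesis by (simp add: h)
qed

lemma fun_aff_family:
  assumes "finite F" "F \<noteq> {}" "g ` F \<subseteq> S" "sum c F = 1"
  shows "(\<lambda>v. \<Sum>i\<in>F. c i * g i v) \<in> fun_aff S"
proof -
  define c' where "c' x = (\<Sum>i\<in>{i\<in>F. g i = x}. c i)" for x
  have "(\<Sum>i\<in>F. c i * g i v) = (\<Sum>x\<in>g ` F. c' x * x v)" for v
  proof -
    have "(\<Sum>i\<in>F. c i * g i v) = (\<Sum>x\<in>g ` F. \<Sum>i\<in>{i\<in>F. g i = x}. c i * g i v)"
      using assms(1) by (rule sum.image_gen)
    also have "\<dots> = (\<Sum>x\<in>g ` F. c' x * x v)"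
      unfolding c'_def by (rule sum.cong) (auto simp: sum_distrib_right)
    finally show ?thesis .
  qed
  moreover have "sum c' (g ` F) = 1"
    using assms(4) sum.image_gen[OF assms(1), of c g] unfolding c'_def by simp
  ultimately show ?thesis
    unfolding fun_aff_def using assms by blast
qed

text \<open>For a linear functional x on a Euclidean space, adjoint x 1 is its Riesz representative:
  x v = v \<bullet> adjoint x 1 by adjoint_works.\<close>

lemma inner_mem_fun_aff:
  fixes S :: "('v::euclidean_space \<Rightarrow> real) set"
  assumes lin: "\<forall>x\<in>S. linear x" and "a \<in> affine hull ((\<lambda>x. adjoint x 1) ` S)"
  shows "(\<lambda>v. v \<bullet> a) \<in> fun_aff S"
proof -
  obtain T u where T: "finite T" "T \<noteq> {}" "T \<subseteq> (\<lambda>x. adjoint x 1) ` S" "sum u T = 1"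
    and a: "a = (\<Sum>w\<in>T. u w *\<^sub>R w)"
    using assms(2) unfolding affine_hull_explicit by blast
  have "\<forall>w\<in>T. \<exists>x. x \<in> S \<and> adjoint x 1 = w"
    using T(3) by blast
  then obtain g where g: "\<forall>w\<in>T. g w \<in> S \<and> adjoint (g w) 1 = w"
    by (rule bchoice[THEN exE])
  have "v \<bullet> w = g w v" if "w \<in> T" for v w
    using adjoint_works[of "g w" v 1] g that lin by simp
  then have "(\<lambda>v. v \<bullet> a) = (\<lambda>v. \<Sum>w\<in>T. u w * g w v)"
    by (simp add: a inner_sum_right)
  also have "\<dots> \<in> fun_aff S"
    using T g by (intro fun_aff_family) auto
  finally show ?thesis .
qed

lemma mem_translation_space_fun_affI:
  fixes S :: "('v::euclidean_space \<Rightarrow> real) set"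
  assumes lin: "\<forall>x\<in>S. linear x" and "s\<^sub>0 \<in> S" and "linear f"
    and vanish: "\<And>v. (\<forall>x\<in>S. x v = s\<^sub>0 v) \<Longrightarrow> f v = 0"
  shows "f \<in> translation_space (fun_aff S)"
proof -
  define R :: "('v \<Rightarrow> real) \<Rightarrow> 'v" where "R = (\<lambda>x. adjoint x 1)"
  have R: "x v = v \<bullet> R x" if "linear x" for x v
    using adjoint_works[OF that, of v 1] by (simp add: R_def)
  define D where "D = (\<lambda>w. - R s\<^sub>0 + w) ` R ` S"
  obtain y z where y: "y \<in> span D" and z: "\<And>w. w \<in> span D \<Longrightarrow> orthogonal z w"
    and Rf: "R f = y + z"
    using orthogonal_subspace_decomp_exists[of D "R f"] by blast
  have "x z = s\<^sub>0 z" if "x \<in> S" for x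
  proof -
    have "orthogonal z (- R s\<^sub>0 + R x)"
      using that by (intro z span_base) (simp add: D_def)
    then show ?thesis
      using R[of x z] R[of s\<^sub>0 z] lin that \<open>s\<^sub>0 \<in> S\<close>
      by (simp add: orthogonal_def inner_diff_right inner_commute)
  qed
  then have "z \<bullet> R f = 0"
    using vanish R[OF \<open>linear f\<close>] by simp
  moreover have "z \<bullet> y = 0"
    using z[OF y] by (simp add: orthogonal_def)
  ultimately have "z = 0"
    by (simp add: Rf inner_add_right)
  have "R s\<^sub>0 \<in> affine hull (R ` S)"
    using \<open>s\<^sub>0 \<in> S\<close> by (simp add: hull_inc)
  then have "affine hull (R ` S) = (\<lambda>w. R s\<^sub>0 + w) ` span D"
    unfolding D_def by (rule affine_hull_span_gen)
  then have "R s\<^sub>0 + y \<in> affine hull (R ` S)"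
    using y by simp
  then have "(\<lambda>v. v \<bullet> (R s\<^sub>0 + y)) \<in> fun_aff S" "(\<lambda>v. v \<bullet> R s\<^sub>0) \<in> fun_aff S"
    using inner_mem_fun_aff[OF lin, folded R_def] \<open>R s\<^sub>0 \<in> affine hull (R ` S)\<close> by auto
  moreover have "f = (\<lambda>v. v \<bullet> (R s\<^sub>0 + y) - v \<bullet> R s\<^sub>0)"
    using R[OF \<open>linear f\<close>] Rf \<open>z = 0\<close> by (simp add: fun_eq_iff inner_add_right)
  ultimately show ?thesis
    unfolding translation_space_def
    by (intro CollectI exI[of _ "\<lambda>v. v \<bullet> (R s\<^sub>0 + y)"] exI[of _ "\<lambda>v. v \<bullet> R s\<^sub>0"]) simp
qed

lemma iota_in_span_id_if_pure_states_agree: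
  assumes "hermitian (\<iota> v)" and "P\<^sub>0 \<in> pure_states"
    and agree: "\<forall>P\<in>pure_states. iota_star \<iota> P v = iota_star \<iota> P\<^sub>0 v"
  shows "\<iota> v \<in> span {mat 1}"
proof -
  have "Re (quad_form (\<iota> v) x) = iota_star \<iota> P\<^sub>0 v" if "norm x = 1" for x
  proof -
    have "projector x \<in> pure_states"
      using that by (simp add: pure_states_eq)
    then show ?thesis
      using agree by (simp add: iota_star_projector[symmetric])
  qed
  with assms(1) have "\<iota> v = iota_star \<iota> P\<^sub>0 v *\<^sub>R mat 1"
    by (rule hermitian_eq_scalar_if_quad_form_const)
  then show ?thesis
    by (metis span_base span_scale singletonI)
qed

lemma translation_space_density_ops_subset:
  fixes \<iota> :: "'v::real_vector \<Rightarrow> complex^'n^'n"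
  assumes lin: "linear \<iota>"
  shows "translation_space (fun_aff (iota_star \<iota> ` density_ops))
           \<subseteq> {f :: 'v \<Rightarrow> real. linear f \<and> (\<forall>v. \<iota> v \<in> span {mat 1} \<longrightarrow> f v = 0)}"
proof
  fix h assume h: "h \<in> translation_space (fun_aff (iota_star \<iota> ` density_ops))"
  have "linear h"
    by (rule translation_space_fun_aff_linear[OF _ h]) (simp add: linear_iota_star[OF lin])
  moreover have "h v = 0" if v: "\<iota> v \<in> span {mat 1}" for v
  proof -
    obtain r where "\<iota> v = r *\<^sub>R mat 1"
      using v by (auto simp: span_singleton)
    then have "\<forall>x\<in>iota_star \<iota> ` density_ops. x v = r"
      by (auto simp: density_ops_iff iota_star_scalar)
    then show ?thesis
      using h by (rule translation_space_fun_aff_eval)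
  qed
  ultimately show "h \<in> {f :: 'v \<Rightarrow> real. linear f \<and> (\<forall>v. \<iota> v \<in> span {mat 1} \<longrightarrow> f v = 0)}"
    by blast
qed

lemma subset_translation_space_pure_states:
  fixes \<iota> :: "'v::euclidean_space \<Rightarrow> complex^'n^'n"
  assumes lin: "linear \<iota>" and herm: "\<forall>v. hermitian (\<iota> v)"
  shows "{f :: 'v \<Rightarrow> real. linear f \<and> (\<forall>v. \<iota> v \<in> span {mat 1} \<longrightarrow> f v = 0)}
           \<subseteq> translation_space (fun_aff (iota_star \<iota> ` pure_states))"
proof
  fix f assume f: "f \<in> {f :: 'v \<Rightarrow> real. linear f \<and> (\<forall>v. \<iota> v \<in> span {mat 1} \<longrightarrow> f v = 0)}"
  define P\<^sub>0 :: "complex^'n^'n" where "P\<^sub>0 = projector (axis undefined 1)"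
  have "P\<^sub>0 \<in> pure_states"
    by (simp add: P\<^sub>0_def pure_states_eq)
  show "f \<in> translation_space (fun_aff (iota_star \<iota> ` pure_states))"
  proof (rule mem_translation_space_fun_affI[of _ "iota_star \<iota> P\<^sub>0"])
    show "\<forall>x\<in>iota_star \<iota> ` pure_states. linear x"
      using linear_iota_star[OF lin] by blast
    show "iota_star \<iota> P\<^sub>0 \<in> iota_star \<iota> ` pure_states"
      using \<open>P\<^sub>0 \<in> pure_states\<close> by (rule imageI)
    show "linear f"
      using f by blast
    show "f v = 0" if agree: "\<forall>x\<in>iota_star \<iota> ` pure_states. x v = iota_star \<iota> P\<^sub>0 v" for v
    proof -
      have "\<iota> v \<in> span {mat 1}"
        using herm agree
        by (intro iota_in_span_id_if_pure_states_agree[OF _ \<open>P\<^sub>0 \<in> pure_states\<close>]) auto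
      then show ?thesis
        using f by blast
    qed
  qed
qed

theorem lemma2p11:
  fixes \<iota> :: "'v::euclidean_space \<Rightarrow> complex^'n^'n"
    and W :: "complex^'n^'n"
  assumes lin: "linear \<iota>"
    and herm: "\<forall>v. hermitian (\<iota> v)"
    and hW: "hermitian W"
  shows "translation_space (fun_aff (iota_star \<iota> ` pure_states))
           = translation_space (fun_aff (iota_star \<iota> ` density_ops))
       \<and> translation_space (fun_aff (iota_star \<iota> ` density_ops))
           = {f :: 'v \<Rightarrow> real. linear f \<and>
                (\<forall>v. \<iota> v \<in> span {mat 1 :: complex^'n^'n} \<longrightarrow> f v = 0)}"
proof -
  \<comment> \<open>The interaction W is part of the functional theory but does not enter the statement.\<close>
  have "translation_space (fun_aff (iota_star \<iota> ` pure_states))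
          \<subseteq> translation_space (fun_aff (iota_star \<iota> ` density_ops))"
    by (intro translation_space_mono fun_aff_mono image_mono pure_states_subset_density_ops)
  with translation_space_density_ops_subset[OF lin] subset_translation_space_pure_states[OF lin herm]
  show ?thesis
    by (intro conjI subset_antisym) blast+
qed

end
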